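(* Let $\lambda>0$, $\omega_0\ne0$ with $\omega_0^2/(2\lambda)<2$, and let $\tilde{\mathbf r}_\lambda(t,\omega_0)$ be the trajectory defined in the context. Then at every time $t\ge0$ the minimum possible root-mean-square size of the system for its current cohesion is achieved: with $\varphi=\varphi(t)$, $$b(\varphi)=\frac{C(\mathbf m)}{f(\varphi)\sqrt{\sum_jm_j}}=\min\{b(\mathbf r):\ \mathbf r\in\mathfrak R,\ f(\mathbf r)=f(\varphi)\},$$ where $b(\varphi)$ and $f(\varphi)$ are the root-mean-square size and the cohesion of the system at time $t$.
   Context: Fix $N\ge2$, masses $\mathbf m=(m_1,\dots,m_N)$, $m_i>0$, $\gamma>0$. Planar configuration space $\mathfrak R=\{\mathbf r=(\mathbf r_1,\dots,\mathbf r_N)\in(\mathbb R^2)^N:\ \mathbf r_i\neq\mathbf r_j \text{ for } i\neq j\}$; cohesion $f(\mathbf r)=\sum_{i<j}\frac{\gamma m_im_j}{|\mathbf r_j-\mathbf r_i|}$; $g(\mathbf r)=\sum_i m_i|\mathbf r_i|^2$; root-mean-square size $b(\mathbf r)=\sqrt{g(\mathbf r)/\sum_jm_j}$; $C(\mathbf m)=\min\{f(\mathbf r):\mathbf r\in\mathfrak R,\ g(\mathbf r)=1\}$. Let $\mathbf r_\lambda=(\mathbf r_{1\lambda},\dots,\mathbf r_{N\lambda})$ be a global minimizer of $f+\lambda g$ on $\mathfrak R$; identify $\mathbb R^2$ with $\mathbb C$, $z_{j\lambda}\leftrightarrow\mathbf r_{j\lambda}$. Put $e=1-\omega_0^2/(2\lambda)$,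 $a(\varphi)=(1-e)/(1-e\cos\varphi)$, and define $\varphi(t)$ by $\omega_0t=\int_0^{\varphi(t)}\frac{(1-e)^2\,d\alpha}{(1-e\cos\alpha)^2}$. The trajectory $\tilde{\mathbf r}_\lambda(t,\omega_0)$ has $j$-th particle at complex position $z_{j\lambda}a(\varphi(t))e^{i\varphi(t)}$. *)

theory Defs
  imports "HOL-Analysis.Analysis"
begin

text \<open>Particles are indexed by 0..<N; a planar configuration is a map nat => complex
  (R^2 identified with C); only the values at indices < N matter.\<close>

definition config_space :: "nat \<Rightarrow> (nat \<Rightarrow> complex) set" where
  "config_space N = {r. \<forall>i<N. \<forall>j<N. i \<noteq> j \<longrightarrow> r i \<noteq> r j}"

definition cohesion :: "nat \<Rightarrow> real \<Rightarrow> (nat \<Rightarrow> real) \<Rightarrow> (nat \<Rightarrow> complex) \<Rightarrow> real" where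
  "cohesion N \<gamma> m r = (\<Sum>j<N. \<Sum>i<j. \<gamma> * m i * m j / cmod (r j - r i))"

definition gfun :: "nat \<Rightarrow> (nat \<Rightarrow> real) \<Rightarrow> (nat \<Rightarrow> complex) \<Rightarrow> real" where
  "gfun N m r = (\<Sum>i<N. m i * (cmod (r i))\<^sup>2)"

definition rms_size :: "nat \<Rightarrow> (nat \<Rightarrow> real) \<Rightarrow> (nat \<Rightarrow> complex) \<Rightarrow> real" where
  "rms_size N m r = sqrt (gfun N m r / (\<Sum>j<N. m j))"

text \<open>C(m) = min {f r | r in R, g r = 1} (the minimum exists; we write it as the infimum).\<close>
definition Cm :: "nat \<Rightarrow> real \<Rightarrow> (nat \<Rightarrow> real) \<Rightarrow> real" where
  "Cm N \<gamma> m = Inf {cohesion N \<gamma> m r | r. r \<in> config_space N \<and> gfun N m r = 1}"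

definition ecc :: "real \<Rightarrow> real \<Rightarrow> real" where
  "ecc lam \<omega>0 = 1 - \<omega>0\<^sup>2 / (2 * lam)"

definition afun :: "real \<Rightarrow> real \<Rightarrow> real" where
  "afun e \<phi> = (1 - e) / (1 - e * cos \<phi>)"

definition phifun :: "real \<Rightarrow> real \<Rightarrow> real \<Rightarrow> real" where
  "phifun e \<omega>0 t = (THE p. \<omega>0 * t = (LBINT \<alpha>=0..p. (1 - e)\<^sup>2 / (1 - e * cos \<alpha>)\<^sup>2))"

definition traj :: "(nat \<Rightarrow> complex) \<Rightarrow> real \<Rightarrow> real \<Rightarrow> real \<Rightarrow> nat \<Rightarrow> complex" where
  "traj z lam \<omega>0 t j =
     (let e = ecc lam \<omega>0; p = phifun e \<omega>0 t
      in z j * complex_of_real (afun e p) * exp (\<i> * complex_of_real p))"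

end

theory Submission
  imports Defs
begin

text \<open>The cohesion f is homogeneous of degree -1 and g of degree 2 under complex scalings
  r \<mapsto> c r, so f \<cdot> sqrt g is scale invariant. Rescaling any configuration to the value of g at
  a minimizer z of f + \<lambda> g shows that z minimizes f \<cdot> sqrt g; in particular C(m) = f(z) sqrt(g(z)).
  The trajectory is z scaled by the nonzero complex number a(\<phi>) e^{i\<phi>}, so it minimizes
  f \<cdot> sqrt g as well, and for fixed cohesion this is exactly the minimality of b = sqrt(g / \<Sum>m).\<close>

definition scale_free_cohesion :: "nat \<Rightarrow> real \<Rightarrow> (nat \<Rightarrow> real) \<Rightarrow> (nat \<Rightarrow> complex) \<Rightarrow> real" where
  "scale_free_cohesion N \<gamma> m r = cohesion N \<gamma> m r * sqrt (gfun N m r)"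

lemma config_space_scale:
  assumes "r \<in> config_space N" "c \<noteq> 0"
  shows "(\<lambda>j. c * r j) \<in> config_space N"
  using assms unfolding config_space_def by auto

lemma cohesion_scale: "cohesion N \<gamma> m (\<lambda>j. c * r j) = cohesion N \<gamma> m r / cmod c"
proof -
  have "\<gamma> * m i * m j / cmod (c * r j - c * r i) = \<gamma> * m i * m j / cmod (r j - r i) / cmod c"
    for i j
    by (simp add: right_diff_distrib[symmetric] norm_mult)
  then show ?thesis
    unfolding cohesion_def sum_divide_distrib by presburger
qed

lemma gfun_scale: "gfun N m (\<lambda>j. c * r j) = (cmod c)\<^sup>2 * gfun N m r"
  unfolding gfun_def by (simp add: sum_distrib_left norm_mult power_mult_distrib algebra_simps)

lemma scale_free_cohesion_scale:
  assumes "c \<noteq> 0"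
  shows "scale_free_cohesion N \<gamma> m (\<lambda>j. c * r j) = scale_free_cohesion N \<gamma> m r"
proof -
  have "sqrt ((cmod c)\<^sup>2 * gfun N m r) = cmod c * sqrt (gfun N m r)"
    by (simp add: real_sqrt_mult)
  then show ?thesis
    using assms by (simp add: scale_free_cohesion_def cohesion_scale gfun_scale)
qed

lemma gfun_pos:
  assumes "r \<in> config_space N" "N \<ge> 2" "\<forall>i<N. m i > 0"
  shows "gfun N m r > 0"
proof -
  have "r 0 \<noteq> r 1"
    using assms(1,2) unfolding config_space_def by auto
  then have "r 0 \<noteq> 0 \<or> r 1 \<noteq> 0"
    by auto
  then obtain i where i: "i < N" "r i \<noteq> 0"
    using assms(2) by (auto intro: that[of 0] that[of 1])
  have "0 < m i * (cmod (r i))\<^sup>2"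
    using i assms(3) by simp
  also have "\<dots> \<le> gfun N m r"
    unfolding gfun_def
    by (rule member_le_sum[where f = "\<lambda>i. m i * (cmod (r i))\<^sup>2"]) (use i assms(3) in auto)
  finally show ?thesis .
qed

lemma cohesion_pos:
  assumes "r \<in> config_space N" "N \<ge> 2" "\<forall>i<N. m i > 0" "\<gamma> > 0"
  shows "cohesion N \<gamma> m r > 0"
proof -
  have m_nonneg: "i < N \<Longrightarrow> 0 \<le> m i" for i
    using assms(3) by (simp add: less_imp_le)
  have "r 1 \<noteq> r 0"
    using assms(1,2) unfolding config_space_def by auto
  then have "0 < (\<Sum>i<1. \<gamma> * m i * m 1 / cmod (r 1 - r i))"
    using assms(2-4) by auto
  also have "\<dots> \<le> cohesion N \<gamma> m r"
    unfolding cohesion_def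
    by (rule member_le_sum[where f = "\<lambda>j. \<Sum>i<j. \<gamma> * m i * m j / cmod (r j - r i)"])
       (use assms(2,4) m_nonneg in \<open>auto intro!: sum_nonneg divide_nonneg_nonneg\<close>)
  finally show ?thesis .
qed

lemma exists_rescaling_with_gfun:
  assumes "r \<in> config_space N" "gfun N m r > 0" "G > 0"
  obtains r' where "r' \<in> config_space N" "gfun N m r' = G"
    "scale_free_cohesion N \<gamma> m r' = scale_free_cohesion N \<gamma> m r"
proof
  define s where "s = sqrt G / sqrt (gfun N m r)"
  have "s > 0"
    using assms(2,3) unfolding s_def by simp
  then show "(\<lambda>j. complex_of_real s * r j) \<in> config_space N"
    and "scale_free_cohesion N \<gamma> m (\<lambda>j. complex_of_real s * r j) = scale_free_cohesion N \<gamma> m r"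
    using assms(1) by (simp_all add: config_space_scale scale_free_cohesion_scale)
  have "gfun N m (\<lambda>j. complex_of_real s * r j) = s\<^sup>2 * gfun N m r"
    using \<open>s > 0\<close> by (simp add: gfun_scale)
  also have "\<dots> = G"
    using assms(2,3) by (simp add: s_def power_divide)
  finally show "gfun N m (\<lambda>j. complex_of_real s * r j) = G" .
qed

lemma minimizer_minimizes_scale_free_cohesion:
  assumes "N \<ge> 2" "\<forall>i<N. m i > 0" "z \<in> config_space N"
    and min: "\<forall>r\<in>config_space N.
      cohesion N \<gamma> m z + lam * gfun N m z \<le> cohesion N \<gamma> m r + lam * gfun N m r"
    and "r \<in> config_space N"
  shows "scale_free_cohesion N \<gamma> m z \<le> scale_free_cohesion N \<gamma> m r"
proof -
  have "gfun N m z > 0"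
    using gfun_pos assms(1-3) by blast
  moreover have "gfun N m r > 0"
    using gfun_pos assms(1,2,5) by blast
  ultimately obtain r' where r': "r' \<in> config_space N" "gfun N m r' = gfun N m z"
    "scale_free_cohesion N \<gamma> m r' = scale_free_cohesion N \<gamma> m r"
    using exists_rescaling_with_gfun[OF assms(5)] by blast
  have "cohesion N \<gamma> m z \<le> cohesion N \<gamma> m r'"
    using min r'(1,2) by force
  then have "scale_free_cohesion N \<gamma> m z \<le> scale_free_cohesion N \<gamma> m r'"
    unfolding scale_free_cohesion_def r'(2)
    by (rule mult_right_mono) (simp add: less_imp_le[OF \<open>gfun N m z > 0\<close>])
  then show ?thesis
    using r'(3) by simp
qed

lemma Cm_eq_min_scale_free_cohesion:
  assumes "z \<in> config_space N" "gfun N m z > 0"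
    and min: "\<forall>r\<in>config_space N. scale_free_cohesion N \<gamma> m z \<le> scale_free_cohesion N \<gamma> m r"
  shows "Cm N \<gamma> m = scale_free_cohesion N \<gamma> m z"
  unfolding Cm_def
proof (rule cInf_eq_minimum)
  obtain z' where z': "z' \<in> config_space N" "gfun N m z' = 1"
    "scale_free_cohesion N \<gamma> m z' = scale_free_cohesion N \<gamma> m z"
    using exists_rescaling_with_gfun[of z N m 1] assms(1,2) by auto
  then show "scale_free_cohesion N \<gamma> m z
      \<in> {cohesion N \<gamma> m r | r. r \<in> config_space N \<and> gfun N m r = 1}"
    by (intro CollectI exI[of _ z']) (simp add: scale_free_cohesion_def flip: z'(3))
next
  fix x
  assume "x \<in> {cohesion N \<gamma> m r | r. r \<in> config_space N \<and> gfun N m r = 1}"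
  then show "scale_free_cohesion N \<gamma> m z \<le> x"
    using min by (auto simp: scale_free_cohesion_def)
qed

lemma rms_size_eq_scale_free_cohesion:
  assumes "cohesion N \<gamma> m r \<noteq> 0"
  shows "rms_size N m r
    = scale_free_cohesion N \<gamma> m r / (cohesion N \<gamma> m r * sqrt (\<Sum>j<N. m j))"
  using assms by (simp add: rms_size_def scale_free_cohesion_def real_sqrt_divide)

lemma rms_size_le_of_scale_free_cohesion_le:
  assumes "cohesion N \<gamma> m r = cohesion N \<gamma> m w" "cohesion N \<gamma> m w > 0" "(\<Sum>j<N. m j) \<ge> 0"
    and "scale_free_cohesion N \<gamma> m w \<le> scale_free_cohesion N \<gamma> m r"
  shows "rms_size N m w \<le> rms_size N m r"
  using assms
  by (simp add: rms_size_eq_scale_free_cohesion[of N \<gamma> m] divide_right_mono)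

lemma abs_ecc_less_1:
  assumes "lam > 0" "\<omega>0 \<noteq> 0" "\<omega>0\<^sup>2 / (2 * lam) < 2"
  shows "\<bar>ecc lam \<omega>0\<bar> < 1"
proof -
  have "\<omega>0\<^sup>2 / (2 * lam) > 0"
    using assms(1,2) by simp
  then show ?thesis
    using assms(3) unfolding ecc_def by linarith
qed

lemma afun_pos:
  assumes "\<bar>e\<bar> < 1"
  shows "afun e \<phi> > 0"
proof -
  have "\<bar>e * cos \<phi>\<bar> \<le> \<bar>e\<bar>"
    by (simp add: abs_mult mult_left_le abs_cos_le_one)
  then have "\<bar>e * cos \<phi>\<bar> < 1"
    using assms by linarith
  then show ?thesis
    using assms by (simp add: afun_def)
qed

lemma traj_eq_scale:
  assumes "\<bar>ecc lam \<omega>0\<bar> < 1"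
  obtains c where "c \<noteq> 0" "traj z lam \<omega>0 t = (\<lambda>j. c * z j)"
proof
  define p where "p = phifun (ecc lam \<omega>0) \<omega>0 t"
  show "complex_of_real (afun (ecc lam \<omega>0) p) * exp (\<i> * complex_of_real p) \<noteq> 0"
    using afun_pos[OF assms, of p] by simp
  show "traj z lam \<omega>0 t = (\<lambda>j. complex_of_real (afun (ecc lam \<omega>0) p) * exp (\<i> * p) * z j)"
    by (auto simp: traj_def p_def Let_def algebra_simps)
qed

theorem theorem8p4:
  fixes N :: nat and \<gamma> lam \<omega>0 t :: real and m :: "nat \<Rightarrow> real" and z :: "nat \<Rightarrow> complex"
  assumes "N \<ge> 2"
    and "\<forall>i<N. m i > 0"
    and "\<gamma> > 0"
    and "lam > 0"
    and "\<omega>0 \<noteq> 0"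
    and "\<omega>0\<^sup>2 / (2 * lam) < 2"
    and "z \<in> config_space N"
    and "\<forall>r\<in>config_space N.
           cohesion N \<gamma> m z + lam * gfun N m z \<le> cohesion N \<gamma> m r + lam * gfun N m r"
    and "t \<ge> 0"
  shows "rms_size N m (traj z lam \<omega>0 t)
           = Cm N \<gamma> m / (cohesion N \<gamma> m (traj z lam \<omega>0 t) * sqrt (\<Sum>j<N. m j))
       \<and> traj z lam \<omega>0 t \<in> config_space N
       \<and> (\<forall>r\<in>config_space N.
             cohesion N \<gamma> m r = cohesion N \<gamma> m (traj z lam \<omega>0 t)
             \<longrightarrow> rms_size N m (traj z lam \<omega>0 t) \<le> rms_size N m r)"
proof -
  define w where "w = traj z lam \<omega>0 t"
  obtain c where "c \<noteq> 0" and w: "w = (\<lambda>j. c * z j)"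
    using traj_eq_scale[OF abs_ecc_less_1[OF assms(4-6)]] unfolding w_def by blast
  have w_config: "w \<in> config_space N"
    using config_space_scale[OF assms(7) \<open>c \<noteq> 0\<close>] w by simp
  have w_min: "\<forall>r\<in>config_space N. scale_free_cohesion N \<gamma> m w \<le> scale_free_cohesion N \<gamma> m r"
    using minimizer_minimizes_scale_free_cohesion[OF assms(1,2,7,8)]
      scale_free_cohesion_scale[OF \<open>c \<noteq> 0\<close>] w by simp
  have Cm: "Cm N \<gamma> m = scale_free_cohesion N \<gamma> m w"
    using Cm_eq_min_scale_free_cohesion[OF w_config gfun_pos[OF w_config assms(1,2)]] w_min
    by blast
  have w_pos: "cohesion N \<gamma> m w > 0"
    using cohesion_pos[OF w_config assms(1-3)] .
  have "(\<Sum>j<N. m j) \<ge> 0"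
    using assms(2) by (intro sum_nonneg) (simp add: less_imp_le)
  show ?thesis
    unfolding w_def[symmetric]
  proof (intro conjI ballI impI)
    show "rms_size N m w = Cm N \<gamma> m / (cohesion N \<gamma> m w * sqrt (\<Sum>j<N. m j))"
      unfolding Cm using rms_size_eq_scale_free_cohesion w_pos by simp
    show "w \<in> config_space N"
      by (fact w_config)
    show "rms_size N m w \<le> rms_size N m r"
      if "r \<in> config_space N" "cohesion N \<gamma> m r = cohesion N \<gamma> m w" for r
      using rms_size_le_of_scale_free_cohesion_le that(2) w_pos \<open>(\<Sum>j<N. m j) \<ge> 0\<close>
        w_min that(1) by blast
  qed
qed

end
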